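(* Let $f$ be a function, $x^\star$ one of its global optima with associated $(\nu,\rho)$, let $C>1$, and let $d=d(\nu,C,\rho)$. After a run of \texttt{SequOOL} with budget $n$ (deterministic feedback), the simple regret $r_n=f(x^\star)-f(x(n))$ satisfies: - if $d=0$, then $r_n\le \nu\rho^{\frac1C\lfloor n/\bar\log n\rfloor}$; - if $d>0$, then $r_n\le \nu\exp\!\Big(-\frac1d W\big(\frac{d\log(1/\rho)}{C}\lfloor n/\bar\log n\rfloor\big)\Big)$.
   Context: Let $\mathcal X$ be a set and $f:\mathcal X\to\mathbb R$ a function attaining its supremum; a point $x^\star$ with $f(x^\star)=\sup_{x\in\mathcal X}f(x)$ is a global optimum. Hierarchical partitioning $\mathcal P=\{\mathcal P_{h,i}\}$: - for every depth $h\ge 0$, the cells $\{\mathcal P_{h,i}\}_{1\le i\le I_h}$ form a partition of $\mathcal X$, and $\mathcal P_{0,1}=\mathcal X$; - each cell $\mathcal P_{h,i}$ is partitioned into finitely many children cells of depth $h+1$; - each cell has a fixed representative point $x_{h,i}\in\mathcal P_{h,i}$, and we write $f_{h,i}=f(x_{h,i})$; - for a global optimum $x^\star$, $i^\star_h$ is the index of the unique depth-$h$ cell containing $x^\star$. Local smoothness: a global optimum $x^\star$ has associated $(\nu,\rho)$, with $\nu>0$ and $\rho\in(0,1)$, if for all $h\in\mathbb N$ and all $x\in\mathcal P_{h,i^\star_h}$ we have $f(x)\ge f(x^\star)-\nu\rho^h$. Near-optimality dimension: for $\nu>0$, $C>1$, $\rho\in(0,1)$, let $\mathcal N_h(\epsilon)$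 be the number of depth-$h$ cells $\mathcal P_{h,i}$ with $\sup_{x\in\mathcal P_{h,i}}f(x)\ge f(x^\star)-\epsilon$. Define \[ d(\nu,C,\rho)=\inf\{d'\ge 0:\ \forall h\ge 0,\ \mathcal N_h(3\nu\rho^h)\le C\rho^{-d'h}\}, \] which is assumed finite. Notation: - $\bar\log n=\sum_{t=1}^n 1/t$ (the $n$-th harmonic number); - $W$ is the standard Lambert $W$ function: for $A\ge 0$, $W(A)$ is the unique $z\ge 0$ with $ze^z=A$. Deterministic feedback: evaluating a cell $\mathcal P_{h,i}$ returns $f_{h,i}$ exactly. Opening a cell means evaluating each of its children cells once. \texttt{SequOOL} with budget $n$: set $h_{\max}=\lfloor n/\bar\log n\rfloor$ and open $\mathcal P_{0,1}$. Then, for $h=1,2,\dots,h_{\max}$ in increasing order, open the $\lfloor h_{\max}/h\rfloor$ depth-$h$ cells having the largest values $f_{h,j}$ among the evaluated depth-$h$ cells (or all of them if there are fewer). Finally, output $x(n)$, a representative point $x_{h,i}$ of an evaluated cell maximizing $f_{h,i}$. *)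

theory Defs
  imports "HOL-Analysis.Analysis"
begin

text \<open>Depth-h cells are P h i for i in {1..I h}; representatives xr h i.
  Children of a cell P h i are the depth-(h+1) cells contained in it.\<close>
definition hier_partition ::
  "(nat \<Rightarrow> nat \<Rightarrow> 'a set) \<Rightarrow> (nat \<Rightarrow> nat) \<Rightarrow> (nat \<Rightarrow> nat \<Rightarrow> 'a) \<Rightarrow> bool" where
  "hier_partition P I xr \<longleftrightarrow>
     P 0 1 = UNIV \<and>
     (\<forall>h. \<forall>i\<in>{1..I h}. \<forall>j\<in>{1..I h}. i \<noteq> j \<longrightarrow> P h i \<inter> P h j = {}) \<and>
     (\<forall>h. (\<Union>i\<in>{1..I h}. P h i) = UNIV) \<and>
     (\<forall>h. \<forall>i\<in>{1..I h}. xr h i \<in> P h i) \<and>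
     (\<forall>h. \<forall>j\<in>{1..I (Suc h)}. \<exists>i\<in>{1..I h}. P (Suc h) j \<subseteq> P h i)"

definition cell_index :: "(nat \<Rightarrow> nat \<Rightarrow> 'a set) \<Rightarrow> (nat \<Rightarrow> nat) \<Rightarrow> 'a \<Rightarrow> nat \<Rightarrow> nat" where
  "cell_index P I x h = (THE i. i \<in> {1..I h} \<and> x \<in> P h i)"

definition global_opt :: "('a \<Rightarrow> real) \<Rightarrow> 'a \<Rightarrow> bool" where
  "global_opt f xs \<longleftrightarrow> (\<forall>x. f x \<le> f xs)"

definition local_smooth ::
  "(nat \<Rightarrow> nat \<Rightarrow> 'a set) \<Rightarrow> (nat \<Rightarrow> nat) \<Rightarrow> ('a \<Rightarrow> real) \<Rightarrow> 'a \<Rightarrow> real \<Rightarrow> real \<Rightarrow> bool" where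
  "local_smooth P I f xs \<nu> \<rho> \<longleftrightarrow> \<nu> > 0 \<and> 0 < \<rho> \<and> \<rho> < 1 \<and>
     (\<forall>h. \<forall>x\<in>P h (cell_index P I xs h). f x \<ge> f xs - \<nu> * \<rho> ^ h)"

definition near_opt_count ::
  "(nat \<Rightarrow> nat \<Rightarrow> 'a set) \<Rightarrow> (nat \<Rightarrow> nat) \<Rightarrow> ('a \<Rightarrow> real) \<Rightarrow> 'a \<Rightarrow> nat \<Rightarrow> real \<Rightarrow> nat" where
  "near_opt_count P I f xs h \<epsilon> = card {i \<in> {1..I h}. (SUP x\<in>P h i. f x) \<ge> f xs - \<epsilon>}"

definition near_opt_set ::
  "(nat \<Rightarrow> nat \<Rightarrow> 'a set) \<Rightarrow> (nat \<Rightarrow> nat) \<Rightarrow> ('a \<Rightarrow> real) \<Rightarrow> 'a \<Rightarrow> real \<Rightarrow> real \<Rightarrow> real \<Rightarrow> real set" where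
  "near_opt_set P I f xs \<nu> C \<rho> = {d'. d' \<ge> 0 \<and>
     (\<forall>h. real (near_opt_count P I f xs h (3 * \<nu> * \<rho> ^ h)) \<le> C * \<rho> powr (- d' * real h))}"

definition near_opt_dim ::
  "(nat \<Rightarrow> nat \<Rightarrow> 'a set) \<Rightarrow> (nat \<Rightarrow> nat) \<Rightarrow> ('a \<Rightarrow> real) \<Rightarrow> 'a \<Rightarrow> real \<Rightarrow> real \<Rightarrow> real \<Rightarrow> real" where
  "near_opt_dim P I f xs \<nu> C \<rho> = Inf (near_opt_set P I f xs \<nu> C \<rho>)"

definition lambertW :: "real \<Rightarrow> real" where
  "lambertW A = (THE z. z \<ge> 0 \<and> z * exp z = A)"

definition hmax :: "nat \<Rightarrow> nat" where
  "hmax n = nat \<lfloor>real n / harm n\<rfloor>"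

definition evals :: "(nat \<Rightarrow> nat \<Rightarrow> 'a set) \<Rightarrow> (nat \<Rightarrow> nat) \<Rightarrow> (nat \<Rightarrow> nat set) \<Rightarrow> nat \<Rightarrow> nat set" where
  "evals P I Op h = (case h of 0 \<Rightarrow> {}
     | Suc g \<Rightarrow> {j \<in> {1..I (Suc g)}. \<exists>i\<in>Op g. P (Suc g) j \<subseteq> P g i})"

text \<open>Op is the family of opened cells of a run of SequOOL with budget n
  (any tie-breaking among equal values is allowed).\<close>
definition sequool_run ::
  "(nat \<Rightarrow> nat \<Rightarrow> 'a set) \<Rightarrow> (nat \<Rightarrow> nat) \<Rightarrow> (nat \<Rightarrow> nat \<Rightarrow> 'a) \<Rightarrow> ('a \<Rightarrow> real) \<Rightarrow> nat \<Rightarrow> (nat \<Rightarrow> nat set) \<Rightarrow> bool" where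
  "sequool_run P I xr f n Op \<longleftrightarrow>
     Op 0 = {1} \<and>
     (\<forall>h. 1 \<le> h \<and> h \<le> hmax n \<longrightarrow>
        Op h \<subseteq> evals P I Op h \<and>
        card (Op h) = min (hmax n div h) (card (evals P I Op h)) \<and>
        (\<forall>j\<in>Op h. \<forall>j'\<in>evals P I Op h - Op h. f (xr h j') \<le> f (xr h j))) \<and>
     (\<forall>h. hmax n < h \<longrightarrow> Op h = {})"

definition sequool_output ::
  "(nat \<Rightarrow> nat \<Rightarrow> 'a set) \<Rightarrow> (nat \<Rightarrow> nat) \<Rightarrow> (nat \<Rightarrow> nat \<Rightarrow> 'a) \<Rightarrow> ('a \<Rightarrow> real) \<Rightarrow> (nat \<Rightarrow> nat set) \<Rightarrow> nat \<Rightarrow> nat \<Rightarrow> bool" where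
  "sequool_output P I xr f Op h i \<longleftrightarrow> i \<in> evals P I Op h \<and>
     (\<forall>h' j. j \<in> evals P I Op h' \<longrightarrow> f (xr h' j) \<le> f (xr h i))"

end

theory Submission
  imports Defs
begin

text \<open>
  Let \<open>N\<^sub>k\<close> be the number of depth-\<open>k\<close> cells that are \<open>3\<nu>\<rho>\<^sup>k\<close>-near-optimal.
  If the optimal cell of depth \<open>k - 1\<close> is opened, its child containing \<open>x\<^sup>\<star>\<close> is
  evaluated and has value at least \<open>f(x\<^sup>\<star>) - \<nu>\<rho>\<^sup>k\<close>; every evaluated cell ranked
  above it is near-optimal, so it is among the \<open>\<lfloor>h\<^sub>m\<^sub>a\<^sub>x/k\<rfloor>\<close> opened cells as
  soon as \<open>k N\<^sub>k \<le> h\<^sub>m\<^sub>a\<^sub>x\<close>. Hence if \<open>k N\<^sub>k \<le> h\<^sub>m\<^sub>a\<^sub>x\<close> for all \<open>k \<le> t\<close>, the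
  optimal cell of depth \<open>\<lfloor>t\<rfloor> + 1\<close> is evaluated and the regret is at most
  \<open>\<nu>\<rho>\<^sup>t\<close>. With \<open>N\<^sub>k \<le> C\<rho>\<^sup>-\<^sup>d\<^sup>k\<close> the condition holds for \<open>t = h\<^sub>m\<^sub>a\<^sub>x/C\<close> when
  \<open>d = 0\<close>, and for the \<open>t\<close> solving \<open>t C\<rho>\<^sup>-\<^sup>d\<^sup>t = h\<^sub>m\<^sub>a\<^sub>x\<close> when \<open>d > 0\<close>, which is
  expressed through the Lambert \<open>W\<close> function.
\<close>

lemma mult_exp_strict_mono:
  fixes x y :: real
  assumes "0 \<le> x" "x < y"
  shows "x * exp x < y * exp y"
proof -
  have "x * exp x \<le> x * exp y" using assms by (intro mult_left_mono) auto
  also have "\<dots> < y * exp y" using assms by (intro mult_strict_right_mono) auto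
  finally show ?thesis .
qed

lemma mult_exp_mono:
  fixes x y :: real
  assumes "0 \<le> x" "x \<le> y"
  shows "x * exp x \<le> y * exp y"
  using assms mult_exp_strict_mono[of x y] by (cases "x = y") auto

lemma ex1_mult_exp_eq:
  fixes A :: real
  assumes "0 \<le> A"
  shows "\<exists>!z. 0 \<le> z \<and> z * exp z = A"
proof (rule ex_ex1I)
  have "A * 1 \<le> A * exp A" using assms by (intro mult_left_mono) auto
  moreover have "continuous_on {0..A} (\<lambda>z. z * exp z)" by (intro continuous_intros)
  ultimately show "\<exists>z. 0 \<le> z \<and> z * exp z = A"
    using IVT'[of "\<lambda>z. z * exp z" 0 A A] assms by auto
next
  fix y z assume "0 \<le> y \<and> y * exp y = A" "0 \<le> z \<and> z * exp z = A"
  then show "y = z" using mult_exp_strict_mono[of y z] mult_exp_strict_mono[of z y]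
    by (cases y z rule: linorder_cases) auto
qed

lemma lambertW:
  assumes "0 \<le> A"
  shows lambertW_nonneg: "0 \<le> lambertW A"
    and lambertW_mult_exp: "lambertW A * exp (lambertW A) = A"
  using theI'[OF ex1_mult_exp_eq[OF assms]] unfolding lambertW_def by auto

lemma cell_index:
  assumes "hier_partition P I xr"
  shows cell_index_mem: "cell_index P I x h \<in> {1..I h}"
    and point_in_cell_index: "x \<in> P h (cell_index P I x h)"
    and cell_index_unique: "j \<in> {1..I h} \<Longrightarrow> x \<in> P h j \<Longrightarrow> cell_index P I x h = j"
proof -
  have "\<And>i j. i \<in> {1..I h} \<Longrightarrow> j \<in> {1..I h} \<Longrightarrow> i \<noteq> j \<Longrightarrow> P h i \<inter> P h j = {}"
    and "(\<Union>i\<in>{1..I h}. P h i) = UNIV"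
    using assms unfolding hier_partition_def by blast+
  then have ex1: "\<exists>!i. i \<in> {1..I h} \<and> x \<in> P h i" by blast
  from theI'[OF ex1] show "cell_index P I x h \<in> {1..I h}" "x \<in> P h (cell_index P I x h)"
    unfolding cell_index_def by auto
  then show "j \<in> {1..I h} \<Longrightarrow> x \<in> P h j \<Longrightarrow> cell_index P I x h = j"
    using ex1 by blast
qed

lemma cell_index_0:
  assumes "hier_partition P I xr"
  shows "cell_index P I x 0 = 1"
proof -
  have "P 0 1 = UNIV" using assms unfolding hier_partition_def by blast
  moreover have "1 \<le> I 0" using cell_index_mem[OF assms, of x 0] by auto
  ultimately show ?thesis by (intro cell_index_unique[OF assms]) auto
qed

lemma cell_index_Suc_in_evals:
  assumes part: "hier_partition P I xr" and "cell_index P I x g \<in> Op g"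
  shows "cell_index P I x (Suc g) \<in> evals P I Op (Suc g)"
proof -
  let ?c = "cell_index P I x (Suc g)"
  obtain i where i: "i \<in> {1..I g}" "P (Suc g) ?c \<subseteq> P g i"
    using part cell_index_mem[OF part] unfolding hier_partition_def by blast
  then have "cell_index P I x g = i"
    using cell_index_unique[OF part] point_in_cell_index[OF part] by blast
  then show ?thesis
    using assms i cell_index_mem[OF part] unfolding evals_def by auto
qed

lemma top_selection_mem:
  fixes v :: "'i \<Rightarrow> 'b::linorder"
  assumes "finite E" "T \<subseteq> E" "card T = min m (card E)"
    and top: "\<forall>j\<in>T. \<forall>j'\<in>E - T. v j' \<le> v j"
    and "c \<in> E" "card {j\<in>E. v c \<le> v j} \<le> m"
  shows "c \<in> T"
proof (rule ccontr)
  assume c: "c \<notin> T"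
  then have "T \<subset> E" using assms(2,5) by blast
  then have "card T < card E" using assms(1) by (simp add: psubset_card_mono)
  then have "card T = m" using assms(3) by linarith
  have "insert c T \<subseteq> {j\<in>E. v c \<le> v j}" using top assms(2,5) c by blast
  then have "card (insert c T) \<le> card {j\<in>E. v c \<le> v j}"
    using assms(1) by (intro card_mono) auto
  then show False using c \<open>card T = m\<close> finite_subset[OF assms(2,1)] assms(6) by simp
qed

text \<open>The infimum \<open>d\<close> itself satisfies the defining inequalities, as they are closed
  conditions on \<open>d'\<close>.\<close>
lemma near_opt_count_le_dim:
  assumes "0 < \<rho>" and "near_opt_set P I f xs \<nu> C \<rho> \<noteq> {}"
  shows "real (near_opt_count P I f xs h (3 * \<nu> * \<rho> ^ h))
           \<le> C * \<rho> powr (- near_opt_dim P I f xs \<nu> C \<rho> * real h)"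
proof -
  let ?N = "real (near_opt_count P I f xs h (3 * \<nu> * \<rho> ^ h))"
  have "closed {d'. ?N \<le> C * \<rho> powr (- d' * real h)}"
    using assms(1) by (intro closed_Collect_le continuous_intros) auto
  moreover have "near_opt_set P I f xs \<nu> C \<rho> \<subseteq> {d'. ?N \<le> C * \<rho> powr (- d' * real h)}"
    unfolding near_opt_set_def by auto
  moreover have "bdd_below (near_opt_set P I f xs \<nu> C \<rho>)"
    unfolding near_opt_set_def bdd_below_def by auto
  ultimately show ?thesis
    using closed_subset_contains_Inf assms unfolding near_opt_dim_def by blast
qed

lemma mult_le_of_le_lambertW:
  fixes d L C H k N :: real
  assumes "0 < d" "0 < L" "0 < C" "0 \<le> H" "0 \<le> k"
    and N: "N \<le> C * exp (d * k * L)"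
    and k: "k \<le> lambertW (d * L / C * H) / (d * L)"
  shows "N * k \<le> H"
proof -
  define W where "W = lambertW (d * L / C * H)"
  have "0 \<le> d * L / C * H" using assms by simp
  note W = lambertW[OF this, folded W_def]
  have "d * k * L \<le> W" using k assms(1,2) unfolding W_def by (simp add: field_simps)
  then have "(d * k * L) * exp (d * k * L) \<le> W * exp W"
    using assms by (intro mult_exp_mono) auto
  have "N * k \<le> C * exp (d * k * L) * k" using N assms(5) by (rule mult_right_mono)
  also have "\<dots> = C / (d * L) * ((d * k * L) * exp (d * k * L))" using assms by (simp add: field_simps)
  also have "\<dots> \<le> C / (d * L) * (W * exp W)"
    using \<open>(d * k * L) * exp (d * k * L) \<le> W * exp W\<close> assms by (intro mult_left_mono) auto
  also have "\<dots> = H" using W(2) assms by (simp add: field_simps)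
  finally show ?thesis .
qed

locale sequool_setting =
  fixes P :: "nat \<Rightarrow> nat \<Rightarrow> 'a set" and I :: "nat \<Rightarrow> nat" and xr :: "nat \<Rightarrow> nat \<Rightarrow> 'a"
    and f :: "'a \<Rightarrow> real" and xs :: 'a and \<nu> \<rho> :: real and n :: nat
    and Op :: "nat \<Rightarrow> nat set"
  assumes part: "hier_partition P I xr"
    and opt: "global_opt f xs"
    and smooth: "local_smooth P I f xs \<nu> \<rho>"
    and run: "sequool_run P I xr f n Op"
begin

abbreviation opt_cell :: "nat \<Rightarrow> nat" where
  "opt_cell h \<equiv> cell_index P I xs h"

abbreviation near_opt_cells :: "nat \<Rightarrow> nat set" where
  "near_opt_cells h \<equiv> {i \<in> {1..I h}. f xs - 3 * \<nu> * \<rho> ^ h \<le> (SUP x\<in>P h i. f x)}"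

lemma smooth_params: "0 < \<nu>" "0 < \<rho>" "\<rho> < 1"
  using smooth unfolding local_smooth_def by auto

lemma opt_cell_rep_near_opt: "f xs - \<nu> * \<rho> ^ h \<le> f (xr h (opt_cell h))"
  using smooth part cell_index_mem[OF part]
  unfolding local_smooth_def hier_partition_def by blast

lemma near_opt_cellsI:
  assumes j: "j \<in> {1..I h}" and "f xs - \<nu> * \<rho> ^ h \<le> f (xr h j)"
  shows "j \<in> near_opt_cells h"
proof -
  have "0 \<le> \<nu> * \<rho> ^ h" using smooth_params by simp
  then have "f xs - 3 * \<nu> * \<rho> ^ h \<le> f (xr h j)" using assms by linarith
  moreover have "xr h j \<in> P h j" using part j unfolding hier_partition_def by blast
  moreover have "bdd_above (f ` P h j)" using opt unfolding global_opt_def by fast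
  ultimately show ?thesis using j by (auto intro: cSUP_upper2)
qed

lemma opt_cell_opened_Suc:
  assumes opened: "opt_cell g \<in> Op g"
    and count: "card (near_opt_cells (Suc g)) * Suc g \<le> hmax n"
  shows "opt_cell (Suc g) \<in> Op (Suc g)"
proof -
  define h where "h = Suc g"
  define E where "E = evals P I Op h"
  have "opt_cell h \<in> E"
    unfolding E_def h_def by (rule cell_index_Suc_in_evals[OF part, where Op = Op, OF opened])
  have E_sub: "E \<subseteq> {1..I h}" and "finite E" unfolding E_def evals_def h_def by auto
  have ranked_above: "{j\<in>E. f (xr h (opt_cell h)) \<le> f (xr h j)} \<subseteq> near_opt_cells h"
  proof
    fix j assume "j \<in> {j\<in>E. f (xr h (opt_cell h)) \<le> f (xr h j)}"
    then have "j \<in> {1..I h}" "f xs - \<nu> * \<rho> ^ h \<le> f (xr h j)"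
      using E_sub opt_cell_rep_near_opt[of h] by auto
    then show "j \<in> near_opt_cells h" by (rule near_opt_cellsI)
  qed
  have fin: "finite (near_opt_cells h)" by (rule finite_subset[of _ "{1..I h}"]) auto
  have "opt_cell h \<in> near_opt_cells h"
    by (rule near_opt_cellsI[OF cell_index_mem[OF part] opt_cell_rep_near_opt])
  then have "0 < card (near_opt_cells h)" using fin card_gt_0_iff by blast
  then have "h \<le> card (near_opt_cells h) * h" by simp
  then have "h \<le> hmax n" using count unfolding h_def by linarith
  moreover have "1 \<le> h" unfolding h_def by simp
  ultimately have sel: "Op h \<subseteq> E" "card (Op h) = min (hmax n div h) (card E)"
    "\<forall>j\<in>Op h. \<forall>j'\<in>E - Op h. f (xr h j') \<le> f (xr h j)"
    using run unfolding sequool_run_def E_def by blast+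
  have "card (near_opt_cells h) \<le> hmax n div h"
    using count unfolding h_def by (subst less_eq_div_iff_mult_less_eq) auto
  then have "card {j\<in>E. f (xr h (opt_cell h)) \<le> f (xr h j)} \<le> hmax n div h"
    using card_mono[OF fin ranked_above] by linarith
  then have "opt_cell h \<in> Op h"
    by (rule top_selection_mem[OF \<open>finite E\<close> sel \<open>opt_cell h \<in> E\<close>])
  then show ?thesis unfolding h_def .
qed

lemma opt_cell_opened:
  assumes "\<forall>k\<in>{1..K}. card (near_opt_cells k) * k \<le> hmax n"
  shows "opt_cell K \<in> Op K"
  using assms
proof (induction K)
  case 0
  then show ?case using cell_index_0[OF part] run unfolding sequool_run_def by simp
next
  case (Suc K)
  have "\<forall>k\<in>{1..K}. card (near_opt_cells k) * k \<le> hmax n"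
    using Suc.prems by (meson atLeastAtMost_iff le_SucI)
  then have "opt_cell K \<in> Op K" by (rule Suc.IH)
  moreover have "card (near_opt_cells (Suc K)) * Suc K \<le> hmax n"
    by (rule bspec[OF Suc.prems]) simp
  ultimately show ?case by (rule opt_cell_opened_Suc)
qed

lemma regret_le_powr:
  assumes out: "sequool_output P I xr f Op h i" and "0 \<le> t"
    and count: "\<And>k. 1 \<le> k \<Longrightarrow> real k \<le> t \<Longrightarrow> real (card (near_opt_cells k)) * real k \<le> real (hmax n)"
  shows "f xs - f (xr h i) \<le> \<nu> * \<rho> powr t"
proof -
  define K where "K = nat \<lfloor>t\<rfloor>"
  have K: "real K \<le> t" "t \<le> real (Suc K)" unfolding K_def using \<open>0 \<le> t\<close> by linarith+
  have "\<forall>k\<in>{1..K}. card (near_opt_cells k) * k \<le> hmax n"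
  proof
    fix k assume "k \<in> {1..K}"
    then have "1 \<le> k" "real k \<le> t" using K by auto
    then show "card (near_opt_cells k) * k \<le> hmax n" using count by (simp flip: of_nat_mult)
  qed
  then have "opt_cell (Suc K) \<in> evals P I Op (Suc K)"
    using cell_index_Suc_in_evals[OF part] opt_cell_opened by blast
  then have "f (xr (Suc K) (opt_cell (Suc K))) \<le> f (xr h i)"
    using out unfolding sequool_output_def by blast
  then have "f xs - f (xr h i) \<le> \<nu> * \<rho> ^ Suc K"
    using opt_cell_rep_near_opt[of "Suc K"] by linarith
  also have "\<dots> = \<nu> * \<rho> powr real (Suc K)" using smooth_params by (simp only: powr_realpow)
  also have "\<dots> \<le> \<nu> * \<rho> powr t"
    using smooth_params K by (intro mult_left_mono powr_mono') auto
  finally show ?thesis .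
qed

lemma regret_le_near_opt_dim_zero:
  assumes out: "sequool_output P I xr f Op h i" and "0 < C"
    and dfin: "near_opt_set P I f xs \<nu> C \<rho> \<noteq> {}" and "near_opt_dim P I f xs \<nu> C \<rho> = 0"
  shows "f xs - f (xr h i) \<le> \<nu> * \<rho> powr (real (hmax n) / C)"
proof (rule regret_le_powr[OF out])
  fix k :: nat assume "real k \<le> real (hmax n) / C"
  then have "C * real k \<le> real (hmax n)" using \<open>0 < C\<close> by (simp add: field_simps)
  moreover have "real (card (near_opt_cells k)) \<le> C"
    using near_opt_count_le_dim[OF smooth_params(2) dfin, of k] assms(4) smooth_params
    unfolding near_opt_count_def by simp
  ultimately show "real (card (near_opt_cells k)) * real k \<le> real (hmax n)"
    by (meson mult_right_mono of_nat_0_le_iff order_trans)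
qed (use \<open>0 < C\<close> in simp)

lemma regret_le_near_opt_dim_pos:
  assumes out: "sequool_output P I xr f Op h i" and "0 < C"
    and dfin: "near_opt_set P I f xs \<nu> C \<rho> \<noteq> {}" and d: "0 < near_opt_dim P I f xs \<nu> C \<rho>"
  defines "d \<equiv> near_opt_dim P I f xs \<nu> C \<rho>" and "L \<equiv> ln (1 / \<rho>)"
  shows "f xs - f (xr h i) \<le> \<nu> * exp (- (1 / d) * lambertW (d * L / C * real (hmax n)))"
proof -
  let ?t = "lambertW (d * L / C * real (hmax n)) / (d * L)"
  have "0 < L" using smooth_params unfolding L_def by simp
  have count: "real (card (near_opt_cells k)) \<le> C * exp (d * real k * L)" for k
    using near_opt_count_le_dim[OF smooth_params(2) dfin, of k] smooth_params
    unfolding near_opt_count_def d_def L_def by (simp add: powr_def ln_div)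
  have "0 \<le> d * L / C * real (hmax n)" using d \<open>0 < L\<close> \<open>0 < C\<close> unfolding d_def by simp
  then have "f xs - f (xr h i) \<le> \<nu> * \<rho> powr ?t"
    using d \<open>0 < L\<close> \<open>0 < C\<close> count lambertW_nonneg unfolding d_def
    by (intro regret_le_powr[OF out] mult_le_of_le_lambertW) auto
  also have "\<rho> powr ?t = exp (- (1 / d) * lambertW (d * L / C * real (hmax n)))"
    using d \<open>0 < L\<close> smooth_params unfolding d_def L_def by (simp add: powr_def ln_div field_simps)
  finally show ?thesis .
qed

end

theorem theorem2:
  fixes f :: "'a \<Rightarrow> real" and P :: "nat \<Rightarrow> nat \<Rightarrow> 'a set" and I :: "nat \<Rightarrow> nat"
    and xr :: "nat \<Rightarrow> nat \<Rightarrow> 'a" and xs :: 'a and \<nu> \<rho> C :: real and n :: nat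
    and Op :: "nat \<Rightarrow> nat set" and h i :: nat
  assumes part: "hier_partition P I xr"
    and opt: "global_opt f xs"
    and smooth: "local_smooth P I f xs \<nu> \<rho>"
    and C: "C > 1"
    and dfin: "near_opt_set P I f xs \<nu> C \<rho> \<noteq> {}"
    and n: "n \<ge> 1"
    and run: "sequool_run P I xr f n Op"
    and out: "sequool_output P I xr f Op h i"
  shows "(near_opt_dim P I f xs \<nu> C \<rho> = 0 \<longrightarrow>
            f xs - f (xr h i) \<le> \<nu> * \<rho> powr (real (hmax n) / C)) \<and>
         (near_opt_dim P I f xs \<nu> C \<rho> > 0 \<longrightarrow>
            f xs - f (xr h i) \<le> \<nu> * exp (- (1 / near_opt_dim P I f xs \<nu> C \<rho>) *
               lambertW (near_opt_dim P I f xs \<nu> C \<rho> * ln (1 / \<rho>) / C * real (hmax n))))"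
proof -
  interpret sequool_setting P I xr f xs \<nu> \<rho> n Op using part opt smooth run by unfold_locales
  show ?thesis
    using regret_le_near_opt_dim_zero[OF out _ dfin] regret_le_near_opt_dim_pos[OF out _ dfin] C
    by simp
qed

end
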